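(* Let $A,B,A',B'$ be qubit systems, with Alice holding $AA'$ and Bob holding $BB'$. Define the Bell states $|\psi_{0,1}\rangle=\frac{1}{\sqrt2}(|00\rangle\pm|11\rangle)$, $|\psi_{2,3}\rangle=\frac{1}{\sqrt2}(|01\rangle\pm|10\rangle)$, and write $\psi_i=|\psi_i\rangle\langle\psi_i|$. Define $|\chi_\pm\rangle=\frac12\big(\sqrt{2\pm\sqrt2}\,|00\rangle\pm\sqrt{2\mp\sqrt2}\,|11\rangle\big)$ and $\chi_\pm=|\chi_\pm\rangle\langle\chi_\pm|$. Let $p\in[0,1]$, $\kappa\in[0,1]$, $q_0=q_1=p/2$, $q_2=q_3=(1-p)/2$, and $\rho^{(0)}=\frac12(|00\rangle\langle00|+\psi_2)$, $\rho^{(1)}=\frac12(|11\rangle\langle11|+\psi_3)$, $\rho^{(2)}=\chi_+$, $\rho^{(3)}=\chi_-$ (states on $A'B'$). Let $$\rho_H=(1-\kappa)\sum_{i=0}^3 q_i\,\psi_{i,AB}\otimes\rho^{(i)}_{A'B'}+\kappa\,\frac{I}{16}.$$ Then there exists a unitary of the form $U=\sum_{i,j\in\{0,1\}}|ij\rangle\langle ij|_{AB}\otimes U_{ij,A'B'}$ with each $U_{ij}$ unitary on $A'B'$, such that $$\mathrm{Tr}_{A'B'}\big[U\rho_H U^\dagger\big]=(1-\kappa)\big(p\,\psi_0+(1-p)\,\psi_2\big)+\kappa\,\frac{I}{4}.$$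
   Context: $\{|0\rangle,|1\rangle\}$ denotes the computational basis of each qubit; $|ij\rangle=|i\rangle_A|j\rangle_B$. $I$ denotes the identity operator on the relevant space ($I/16$ is the maximally mixed state on $ABA'B'$, $I/4$ on $AB$). *)

theory Defs
  imports Complex_Main "Jordan_Normal_Form.Matrix" "Jordan_Normal_Form.Schur_Decomposition"
begin

text \<open>Two-qubit computational basis: index of |ij> is 2*i+j.
  The four-qubit space is ordered (AB) tensor (A'B'): index 4*a+b where a indexes AB and b indexes A'B'.\<close>

definition kron :: "complex mat \<Rightarrow> complex mat \<Rightarrow> complex mat" where
  "kron X Y = mat (dim_row X * dim_row Y) (dim_col X * dim_col Y)
     (\<lambda>(i,j). X $$ (i div dim_row Y, j div dim_col Y) * Y $$ (i mod dim_row Y, j mod dim_col Y))"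

definition ketbra :: "complex vec \<Rightarrow> complex mat" where
  "ketbra v = mat (dim_vec v) (dim_vec v) (\<lambda>(i,j). v $ i * cnj (v $ j))"

definition is_unitary :: "nat \<Rightarrow> complex mat \<Rightarrow> bool" where
  "is_unitary n U \<longleftrightarrow> U \<in> carrier_mat n n \<and> U * mat_adjoint U = 1\<^sub>m n \<and> mat_adjoint U * U = 1\<^sub>m n"

definition ptrace2 :: "complex mat \<Rightarrow> complex mat" where
  "ptrace2 M = mat 4 4 (\<lambda>(a,b). \<Sum>j<4. M $$ (4*a+j, 4*b+j))"

definition ket2 :: "nat \<Rightarrow> nat \<Rightarrow> complex vec" where
  "ket2 i j = unit_vec 4 (2*i+j)"

definition s2 :: complex where "s2 = complex_of_real (1 / sqrt 2)"

definition bell :: "nat \<Rightarrow> complex vec" where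
  "bell k = (if k = 0 then vec_of_list [s2, 0, 0, s2]
             else if k = 1 then vec_of_list [s2, 0, 0, -s2]
             else if k = 2 then vec_of_list [0, s2, s2, 0]
             else vec_of_list [0, s2, -s2, 0])"

definition psi :: "nat \<Rightarrow> complex mat" where "psi k = ketbra (bell k)"

definition chi_plus :: "complex vec" where
  "chi_plus = vec_of_list [complex_of_real (sqrt (2 + sqrt 2) / 2), 0, 0, complex_of_real (sqrt (2 - sqrt 2) / 2)]"

definition chi_minus :: "complex vec" where
  "chi_minus = vec_of_list [complex_of_real (sqrt (2 - sqrt 2) / 2), 0, 0, - complex_of_real (sqrt (2 + sqrt 2) / 2)]"

definition rho_sub :: "nat \<Rightarrow> complex mat" where
  "rho_sub k = (if k = 0 then (1/2) \<cdot>\<^sub>m (ketbra (ket2 0 0) + psi 2)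
                else if k = 1 then (1/2) \<cdot>\<^sub>m (ketbra (ket2 1 1) + psi 3)
                else if k = 2 then ketbra chi_plus
                else ketbra chi_minus)"

definition qcoef :: "real \<Rightarrow> nat \<Rightarrow> real" where
  "qcoef p k = (if k < 2 then p / 2 else (1 - p) / 2)"

definition rho_H :: "real \<Rightarrow> real \<Rightarrow> complex mat" where
  "rho_H p \<kappa> =
     complex_of_real (1 - \<kappa>) \<cdot>\<^sub>m
       (  complex_of_real (qcoef p 0) \<cdot>\<^sub>m kron (psi 0) (rho_sub 0)
        + complex_of_real (qcoef p 1) \<cdot>\<^sub>m kron (psi 1) (rho_sub 1)
        + complex_of_real (qcoef p 2) \<cdot>\<^sub>m kron (psi 2) (rho_sub 2)
        + complex_of_real (qcoef p 3) \<cdot>\<^sub>m kron (psi 3) (rho_sub 3))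
     + complex_of_real (\<kappa> / 16) \<cdot>\<^sub>m 1\<^sub>m 16"

definition ctrl_unitary :: "(nat \<Rightarrow> nat \<Rightarrow> complex mat) \<Rightarrow> complex mat" where
  "ctrl_unitary V =
       kron (ketbra (ket2 0 0)) (V 0 0) + kron (ketbra (ket2 0 1)) (V 0 1)
     + kron (ketbra (ket2 1 0)) (V 1 0) + kron (ketbra (ket2 1 1)) (V 1 1)"

end

theory Submission
  imports Defs
begin

(* Let the flag unitaries be V_00 = SWAP.CZ (eigenvalue +1 on |00>, psi_2 and -1 on |11>, psi_3),
   V_01 = the Hadamard on span{|00>, |11>} (eigenvectors chi_+ and chi_- with eigenvalues +1, -1),
   and V_10 = V_11 = I.  Every flag state rho^(i) then lies in a +-1 eigenspace of the unitaries
   V_ab on the two branches |ab> carrying psi_i.  By phase kickback, conjugating psi_i (x) rho^(i)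
   with the controlled unitary and tracing out A'B' multiplies the amplitude of |ab> in the Bell
   vector by that eigenvalue: psi_0 and psi_2 are fixed, and the relative sign of psi_1 and psi_3
   is flipped, turning them into psi_0 and psi_2.  The noise term is unchanged since U U^dagger = I
   and its partial trace is 4 I. *)

definition trace :: "'a::comm_monoid_add mat \<Rightarrow> 'a" where
  "trace A = (\<Sum>i<dim_row A. A $$ (i, i))"

lemma trace_smult:
  assumes "A \<in> carrier_mat n n"
  shows "trace (c \<cdot>\<^sub>m A) = c * trace (A :: 'a::comm_semiring_1 mat)"
  using assms by (simp add: trace_def sum_distrib_left)

lemma mat_adjoint_carrier [simp]:
  "mat_adjoint A \<in> carrier_mat (dim_col A) (dim_row A)"
  "dim_row (mat_adjoint A) = dim_col A" "dim_col (mat_adjoint A) = dim_row A"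
  unfolding mat_adjoint_def by auto

lemma index_mat_adjoint [simp]:
  "i < dim_col A \<Longrightarrow> j < dim_row A \<Longrightarrow> mat_adjoint A $$ (i, j) = cnj (A $$ (j, i))"
  unfolding mat_adjoint_def by (simp add: mat_of_rows_index)

lemma mat_adjoint_one [simp]: "mat_adjoint (1\<^sub>m n :: complex mat) = 1\<^sub>m n"
  by (rule eq_matI) auto

lemma mat_adjoint_zero [simp]: "mat_adjoint (0\<^sub>m n m :: complex mat) = 0\<^sub>m m n"
  by (rule eq_matI) auto

lemma mat_adjoint_add:
  "A \<in> carrier_mat n m \<Longrightarrow> B \<in> carrier_mat n m \<Longrightarrow> mat_adjoint (A + B) = mat_adjoint A + mat_adjoint (B :: complex mat)"
  by (intro eq_matI) auto

lemma mat_adjoint_smult: "mat_adjoint (c \<cdot>\<^sub>m A) = cnj c \<cdot>\<^sub>m mat_adjoint (A :: complex mat)"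
  by (intro eq_matI) auto

lemma mat_adjoint_mult:
  assumes "A \<in> carrier_mat n m" "B \<in> carrier_mat m k"
  shows "mat_adjoint (A * B) = mat_adjoint B * mat_adjoint (A :: complex mat)"
  using assms by (intro eq_matI) (auto simp: scalar_prod_def ac_simps)

lemma is_unitary_one: "is_unitary n (1\<^sub>m n)"
  unfolding is_unitary_def by simp

lemma is_unitary_if_selfadjoint_involution:
  assumes "W \<in> carrier_mat n n" "mat_adjoint W = W" "W * W = 1\<^sub>m n"
  shows "is_unitary n W"
  using assms unfolding is_unitary_def by simp

lemma one_smult_mat [simp]: "1 \<cdot>\<^sub>m A = (A :: 'a::ring_1 mat)"
  by (rule eq_matI) auto

lemma ketbra_carrier [simp]: "ketbra v \<in> carrier_mat (dim_vec v) (dim_vec v)"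
  and dim_ketbra [simp]: "dim_row (ketbra v) = dim_vec v" "dim_col (ketbra v) = dim_vec v"
  unfolding ketbra_def by simp_all

lemma index_ketbra [simp]: "i < dim_vec v \<Longrightarrow> j < dim_vec v \<Longrightarrow> ketbra v $$ (i, j) = v $ i * cnj (v $ j)"
  unfolding ketbra_def by simp

lemma mat_adjoint_ketbra: "mat_adjoint (ketbra v) = ketbra v"
  by (intro eq_matI) auto

lemma ketbra_smult: "ketbra (c \<cdot>\<^sub>v v) = (c * cnj c) \<cdot>\<^sub>m ketbra v"
  by (intro eq_matI) auto

lemma mult_ketbra_eigenvector:
  assumes "W \<in> carrier_mat n n" "v \<in> carrier_vec n" "W *\<^sub>v v = c \<cdot>\<^sub>v v"
  shows "W * ketbra v = c \<cdot>\<^sub>m ketbra v"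
proof (rule eq_matI)
  fix i j assume "i < dim_row (c \<cdot>\<^sub>m ketbra v)" "j < dim_col (c \<cdot>\<^sub>m ketbra v)"
  then have ij: "i < n" "j < n" using assms(2) by (auto simp: ketbra_def)
  have dims: "dim_row W = n" "dim_col W = n" "dim_vec v = n"
    using assms(1,2) by auto
  have "(W * ketbra v) $$ (i, j) = (\<Sum>k<n. W $$ (i, k) * v $ k) * cnj (v $ j)"
    using ij by (simp add: dims scalar_prod_def atLeast0LessThan sum_distrib_right mult.assoc)
  also have "(\<Sum>k<n. W $$ (i, k) * v $ k) = c * v $ i"
    using arg_cong[OF assms(3), of "\<lambda>w. w $ i"] ij by (simp add: dims scalar_prod_def atLeast0LessThan)
  finally show "(W * ketbra v) $$ (i, j) = (c \<cdot>\<^sub>m ketbra v) $$ (i, j)"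
    using assms ij by simp
qed (use assms in auto)

lemma mult_mixture_eigenvectors:
  assumes W: "W \<in> carrier_mat n n" and v: "v \<in> carrier_vec n" and w: "w \<in> carrier_vec n"
    and "W *\<^sub>v v = c \<cdot>\<^sub>v v" "W *\<^sub>v w = c \<cdot>\<^sub>v w"
  shows "W * (d \<cdot>\<^sub>m (ketbra v + ketbra w)) = c \<cdot>\<^sub>m (d \<cdot>\<^sub>m (ketbra v + ketbra w))"
proof -
  have K: "ketbra v \<in> carrier_mat n n" "ketbra w \<in> carrier_mat n n"
    using v w ketbra_carrier by auto
  have "W * (d \<cdot>\<^sub>m (ketbra v + ketbra w)) = d \<cdot>\<^sub>m (W * ketbra v + W * ketbra w)"
    using W K by (simp add: mult_smult_distrib[of _ n n _ n] mult_add_distrib_mat[of _ n n _ n])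
  also have "\<dots> = d \<cdot>\<^sub>m (c \<cdot>\<^sub>m ketbra v + c \<cdot>\<^sub>m ketbra w)"
    using assms by (simp add: mult_ketbra_eigenvector)
  also have "\<dots> = c \<cdot>\<^sub>m (d \<cdot>\<^sub>m (ketbra v + ketbra w))"
    using v w by (intro eq_matI) (auto simp: algebra_simps)
  finally show ?thesis .
qed

lemma kron_carrier [simp]:
  "X \<in> carrier_mat a b \<Longrightarrow> Y \<in> carrier_mat c d \<Longrightarrow> kron X Y \<in> carrier_mat (a * c) (b * d)"
  unfolding kron_def by auto

lemma index_kron:
  assumes "X \<in> carrier_mat a b" "Y \<in> carrier_mat c d" "i < a * c" "j < b * d"
  shows "kron X Y $$ (i, j) = X $$ (i div c, j div d) * Y $$ (i mod c, j mod d)"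
  using assms unfolding kron_def by auto

lemma block_index_less_16 [simp]: "a < 4 \<Longrightarrow> k < 4 \<Longrightarrow> 4 * a + k < (16::nat)"
  by linarith

definition block :: "'a mat \<Rightarrow> nat \<Rightarrow> nat \<Rightarrow> 'a mat" where
  "block M a b = mat 4 4 (\<lambda>(k, l). M $$ (4 * a + k, 4 * b + l))"

lemma block_carrier [simp]: "block M a b \<in> carrier_mat 4 4"
  and dim_block [simp]: "dim_row (block M a b) = 4" "dim_col (block M a b) = 4"
  unfolding block_def by auto

lemma index_block [simp]: "k < 4 \<Longrightarrow> l < 4 \<Longrightarrow> block M a b $$ (k, l) = M $$ (4 * a + k, 4 * b + l)"
  unfolding block_def by simp

lemma eq_mat_blockI:
  assumes "A \<in> carrier_mat 16 16" "B \<in> carrier_mat 16 16"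
    and "\<And>a b. a < 4 \<Longrightarrow> b < 4 \<Longrightarrow> block A a b = block B a b"
  shows "A = B"
proof (rule eq_matI)
  fix i j assume "i < dim_row B" "j < dim_col B"
  then have ij: "i < 16" "j < 16" using assms(2) by auto
  have "block A (i div 4) (j div 4) $$ (i mod 4, j mod 4) = block B (i div 4) (j div 4) $$ (i mod 4, j mod 4)"
    using assms(3) ij by simp
  then show "A $$ (i, j) = B $$ (i, j)"
    by simp
qed (use assms in auto)

lemma block_kron:
  assumes "X \<in> carrier_mat 4 4" "Y \<in> carrier_mat 4 4" "a < 4" "b < 4"
  shows "block (kron X Y) a b = X $$ (a, b) \<cdot>\<^sub>m Y"
  by (rule eq_matI) (use assms in \<open>auto simp: index_kron[OF assms(1,2)]\<close>)

lemma block_one: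
  assumes "a < 4" "b < 4"
  shows "block (1\<^sub>m 16) a b = (if a = b then 1\<^sub>m 4 else 0\<^sub>m 4 4)"
  by (rule eq_matI) (use assms in auto)

lemma block_mat_adjoint:
  assumes "(M :: complex mat) \<in> carrier_mat 16 16" "a < 4" "b < 4"
  shows "block (mat_adjoint M) a b = mat_adjoint (block M b a)"
proof -
  have "dim_row M = 16" "dim_col M = 16"
    using assms(1) by auto
  then show ?thesis
    by (intro eq_matI) (use assms(2,3) in auto)
qed

lemma sum_lessThan_16_blocks:
  fixes f :: "nat \<Rightarrow> 'a::comm_monoid_add"
  shows "(\<Sum>x<16. f x) = (\<Sum>c<4. \<Sum>l<4. f (4 * c + l))"
proof -
  have "(\<Sum>x<16. f x) = (\<Sum>(c, l) \<in> {..<4} \<times> {..<4}. f (4 * c + l))"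
    by (rule sum.reindex_bij_witness[where j = "\<lambda>x. (x div 4, x mod 4)" and i = "\<lambda>(c, l). 4 * c + l"])
      auto
  then show ?thesis
    by (simp add: sum.cartesian_product)
qed

lemma index_mult_block_sum:
  assumes "A \<in> carrier_mat n 16" "B \<in> carrier_mat 16 m" "i < n" "j < m"
  shows "(A * B) $$ (i, j) = (\<Sum>c<4. \<Sum>l<4. A $$ (i, 4 * c + l) * B $$ (4 * c + l, j))"
  using assms by (simp add: scalar_prod_def atLeast0LessThan sum_lessThan_16_blocks)

definition block_diagonal :: "'a::zero mat \<Rightarrow> bool" where
  "block_diagonal M \<longleftrightarrow> (\<forall>a<4. \<forall>b<4. a \<noteq> b \<longrightarrow> block M a b = 0\<^sub>m 4 4)"

lemma block_mult_block_diagonal_left: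
  assumes "A \<in> carrier_mat 16 16" "B \<in> carrier_mat 16 16" "block_diagonal A" "a < 4" "b < 4"
  shows "block (A * B) a b = block A a a * block (B :: 'a::comm_ring_1 mat) a b"
proof (rule eq_matI)
  fix k m assume "k < dim_row (block A a a * block B a b)" "m < dim_col (block A a a * block B a b)"
  then have k: "k < 4" and m: "m < 4" by auto
  have off: "A $$ (4 * a + k, 4 * c + l) = 0" if "c < 4" "c \<noteq> a" "l < 4" for c l
    using assms(3,4) that k index_block[of k l A a c] unfolding block_diagonal_def by fastforce
  have "(A * B) $$ (4 * a + k, 4 * b + m)
      = (\<Sum>c<4. \<Sum>l<4. A $$ (4 * a + k, 4 * c + l) * B $$ (4 * c + l, 4 * b + m))"
    by (rule index_mult_block_sum) (use assms k m in auto)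
  also have "\<dots> = (\<Sum>c<4. if c = a then \<Sum>l<4. A $$ (4 * a + k, 4 * a + l) * B $$ (4 * a + l, 4 * b + m) else 0)"
    by (rule sum.cong) (auto simp: off)
  also have "\<dots> = (block A a a * block B a b) $$ (k, m)"
    using assms k m by (simp add: scalar_prod_def atLeast0LessThan)
  finally show "block (A * B) a b $$ (k, m) = (block A a a * block B a b) $$ (k, m)"
    using k m by simp
qed auto

lemma block_mult_block_diagonal_right:
  assumes "A \<in> carrier_mat 16 16" "B \<in> carrier_mat 16 16" "block_diagonal B" "a < 4" "b < 4"
  shows "block (A * B) a b = block A a b * block (B :: 'a::comm_ring_1 mat) b b"
proof (rule eq_matI)
  fix k m assume "k < dim_row (block A a b * block B b b)" "m < dim_col (block A a b * block B b b)"
  then have k: "k < 4" and m: "m < 4" by auto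
  have off: "B $$ (4 * c + l, 4 * b + m) = 0" if "c < 4" "c \<noteq> b" "l < 4" for c l
    using assms(3,5) that m index_block[of l m B c b] unfolding block_diagonal_def by fastforce
  have "(A * B) $$ (4 * a + k, 4 * b + m)
      = (\<Sum>c<4. \<Sum>l<4. A $$ (4 * a + k, 4 * c + l) * B $$ (4 * c + l, 4 * b + m))"
    by (rule index_mult_block_sum) (use assms k m in auto)
  also have "\<dots> = (\<Sum>c<4. if c = b then \<Sum>l<4. A $$ (4 * a + k, 4 * b + l) * B $$ (4 * b + l, 4 * b + m) else 0)"
    by (rule sum.cong) (auto simp: off)
  also have "\<dots> = (block A a b * block B b b) $$ (k, m)"
    using assms k m by (simp add: scalar_prod_def atLeast0LessThan)
  finally show "block (A * B) a b $$ (k, m) = (block A a b * block B b b) $$ (k, m)"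
    using k m by simp
qed auto

lemma block_diagonal_mat_adjoint:
  "(M :: complex mat) \<in> carrier_mat 16 16 \<Longrightarrow> block_diagonal M \<Longrightarrow> block_diagonal (mat_adjoint M)"
  unfolding block_diagonal_def by (auto simp: block_mat_adjoint)

definition ctrl_block :: "(nat \<Rightarrow> nat \<Rightarrow> complex mat) \<Rightarrow> nat \<Rightarrow> complex mat" where
  "ctrl_block V a = V (a div 2) (a mod 2)"

lemma ctrl_unitary_carrier:
  assumes "\<And>i j. i < 2 \<Longrightarrow> j < 2 \<Longrightarrow> V i j \<in> carrier_mat 4 4"
  shows "ctrl_unitary V \<in> carrier_mat 16 16"
proof -
  have "kron (ketbra (ket2 i j)) (V i j) \<in> carrier_mat 16 16" if "i < 2" "j < 2" for i j
    using kron_carrier[OF ketbra_carrier[of "ket2 i j"] assms[OF that]] by (simp add: ket2_def)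
  then show ?thesis
    unfolding ctrl_unitary_def by (intro add_carrier_mat) auto
qed

lemma block_ctrl_unitary:
  assumes V: "\<And>i j. i < 2 \<Longrightarrow> j < 2 \<Longrightarrow> V i j \<in> carrier_mat 4 4" and "a < 4" "b < 4"
  shows "block (ctrl_unitary V) a b = (if a = b then ctrl_block V a else 0\<^sub>m 4 4)"
proof -
  have Va: "ctrl_block V a \<in> carrier_mat 4 4"
    using assms by (simp add: ctrl_block_def)
  show ?thesis
  proof (rule eq_matI)
    fix k l assume "k < dim_row (if a = b then ctrl_block V a else 0\<^sub>m 4 4)"
      "l < dim_col (if a = b then ctrl_block V a else 0\<^sub>m 4 4)"
    then have kl: "k < 4" "l < 4"
      using Va by (auto split: if_splits)
    have kron_entry: "kron (ketbra (ket2 i j)) (V i j) $$ (4 * a + k, 4 * b + l)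
        = (if a = 2 * i + j \<and> b = 2 * i + j then V i j $$ (k, l) else 0)" if "i < 2" "j < 2" for i j
      using index_kron[OF ketbra_carrier[of "ket2 i j"] V[OF that], of "4 * a + k" "4 * b + l"] assms kl that
      by (simp add: ket2_def unit_vec_def)
    have "dim_row (kron (ketbra (ket2 i j)) (V i j)) = 16" "dim_col (kron (ketbra (ket2 i j)) (V i j)) = 16"
      if "i < 2" "j < 2" for i j
      using V[OF that] by (simp_all add: kron_def ket2_def)
    then have "ctrl_unitary V $$ (4 * a + k, 4 * b + l) = (if a = b then ctrl_block V a $$ (k, l) else 0)"
      using assms kl unfolding ctrl_unitary_def by (auto simp: kron_entry ctrl_block_def)
    then show "block (ctrl_unitary V) a b $$ (k, l) = (if a = b then ctrl_block V a else 0\<^sub>m 4 4) $$ (k, l)"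
      using kl by simp
  qed (use Va in auto)
qed

lemma block_diagonal_ctrl_unitary:
  "(\<And>i j. i < 2 \<Longrightarrow> j < 2 \<Longrightarrow> V i j \<in> carrier_mat 4 4) \<Longrightarrow> block_diagonal (ctrl_unitary V)"
  unfolding block_diagonal_def by (simp add: block_ctrl_unitary)

lemma block_ctrl_unitary_conj:
  assumes V: "\<And>i j. i < 2 \<Longrightarrow> j < 2 \<Longrightarrow> V i j \<in> carrier_mat 4 4"
    and M: "M \<in> carrier_mat 16 16" and "a < 4" "b < 4"
  shows "block (ctrl_unitary V * M * mat_adjoint (ctrl_unitary V)) a b
       = ctrl_block V a * block M a b * mat_adjoint (ctrl_block V b)"
proof -
  let ?U = "ctrl_unitary V"
  have U: "?U \<in> carrier_mat 16 16" "mat_adjoint ?U \<in> carrier_mat 16 16"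
    using ctrl_unitary_carrier[of V, OF V] by auto
  have "block (?U * M * mat_adjoint ?U) a b = block (?U * M) a b * block (mat_adjoint ?U) b b"
    using U M assms by (intro block_mult_block_diagonal_right block_diagonal_mat_adjoint block_diagonal_ctrl_unitary) auto
  also have "block (?U * M) a b = block ?U a a * block M a b"
    using U M assms by (intro block_mult_block_diagonal_left block_diagonal_ctrl_unitary) auto
  finally show ?thesis
    using U assms by (simp add: block_mat_adjoint block_ctrl_unitary[of V, OF V])
qed

lemma is_unitary_ctrl_unitary:
  assumes V: "\<And>i j. i < 2 \<Longrightarrow> j < 2 \<Longrightarrow> is_unitary 4 (V i j)"
  shows "is_unitary 16 (ctrl_unitary V)"
proof -
  let ?U = "ctrl_unitary V"
  have VC: "\<And>i j. i < 2 \<Longrightarrow> j < 2 \<Longrightarrow> V i j \<in> carrier_mat 4 4"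
    using V unfolding is_unitary_def by blast
  have U: "?U \<in> carrier_mat 16 16" "mat_adjoint ?U \<in> carrier_mat 16 16"
    using ctrl_unitary_carrier[of V, OF VC] by auto
  have D: "block_diagonal ?U" "block_diagonal (mat_adjoint ?U)"
    using U block_diagonal_ctrl_unitary[of V, OF VC] block_diagonal_mat_adjoint by auto
  have Vb: "is_unitary 4 (ctrl_block V a)" if "a < 4" for a
    using V that by (simp add: ctrl_block_def)
  have "block (?U * mat_adjoint ?U) a b = block (1\<^sub>m 16) a b
      \<and> block (mat_adjoint ?U * ?U) a b = block (1\<^sub>m 16) a b" if "a < 4" "b < 4" for a b
    using that U D Vb[OF \<open>a < 4\<close>]
    by (cases "a = b")
      (auto simp: block_mult_block_diagonal_left block_mat_adjoint block_ctrl_unitary[of V, OF VC]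
        block_one is_unitary_def)
  then show ?thesis
    unfolding is_unitary_def using U by (auto intro: eq_mat_blockI)
qed

lemma ptrace2_eq_trace_block: "ptrace2 M = mat 4 4 (\<lambda>(a, b). trace (block M a b))"
  unfolding ptrace2_def trace_def by simp

lemma ptrace2_one: "ptrace2 (1\<^sub>m 16) = 4 \<cdot>\<^sub>m 1\<^sub>m 4"
  unfolding ptrace2_eq_trace_block by (intro eq_matI) (auto simp: block_one trace_def)

lemma ptrace2_conj_add:
  assumes "U \<in> carrier_mat 16 16" "A \<in> carrier_mat 16 16" "B \<in> carrier_mat 16 16"
  shows "ptrace2 (U * (A + B) * mat_adjoint U)
       = ptrace2 (U * A * mat_adjoint U) + ptrace2 (U * B * mat_adjoint (U :: complex mat))"
proof -
  have "mat_adjoint U \<in> carrier_mat 16 16"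
    using assms(1) by auto
  then have "U * (A + B) * mat_adjoint U = U * A * mat_adjoint U + U * B * mat_adjoint U"
    and "U * A * mat_adjoint U \<in> carrier_mat 16 16" "U * B * mat_adjoint U \<in> carrier_mat 16 16"
    using assms by (simp_all add: mult_add_distrib_mat add_mult_distrib_mat[of _ 16 16])
  then show ?thesis
    unfolding ptrace2_def by (intro eq_matI) (auto simp: sum.distrib)
qed

lemma ptrace2_conj_smult:
  assumes "U \<in> carrier_mat 16 16" "A \<in> carrier_mat 16 16"
  shows "ptrace2 (U * (c \<cdot>\<^sub>m A) * mat_adjoint U) = c \<cdot>\<^sub>m ptrace2 (U * A * mat_adjoint (U :: complex mat))"
proof -
  have "mat_adjoint U \<in> carrier_mat 16 16"
    using assms(1) by auto
  then have "U * (c \<cdot>\<^sub>m A) * mat_adjoint U = c \<cdot>\<^sub>m (U * A * mat_adjoint U)"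
    and "U * A * mat_adjoint U \<in> carrier_mat 16 16"
    using assms by (simp_all add: mult_smult_distrib mult_smult_assoc_mat[of _ 16 16])
  then show ?thesis
    unfolding ptrace2_def by (intro eq_matI) (auto simp: sum_distrib_left)
qed

lemma ptrace2_ctrl_unitary_conj_kron:
  assumes V: "\<And>i j. i < 2 \<Longrightarrow> j < 2 \<Longrightarrow> V i j \<in> carrier_mat 4 4"
    and X: "X \<in> carrier_mat 4 4" and Y: "Y \<in> carrier_mat 4 4"
  shows "ptrace2 (ctrl_unitary V * kron X Y * mat_adjoint (ctrl_unitary V))
       = mat 4 4 (\<lambda>(a, b). X $$ (a, b) * trace (ctrl_block V a * Y * mat_adjoint (ctrl_block V b)))"
proof -
  have "trace (block (ctrl_unitary V * kron X Y * mat_adjoint (ctrl_unitary V)) a b)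
      = X $$ (a, b) * trace (ctrl_block V a * Y * mat_adjoint (ctrl_block V b))" if "a < 4" "b < 4" for a b
  proof -
    have Va: "ctrl_block V a \<in> carrier_mat 4 4" and Vb: "ctrl_block V b \<in> carrier_mat 4 4"
      using V that by (auto simp: ctrl_block_def)
    then have Vb': "mat_adjoint (ctrl_block V b) \<in> carrier_mat 4 4"
      by auto
    have "block (ctrl_unitary V * kron X Y * mat_adjoint (ctrl_unitary V)) a b
        = X $$ (a, b) \<cdot>\<^sub>m (ctrl_block V a * Y * mat_adjoint (ctrl_block V b))"
      using kron_carrier[OF X Y] Va Vb' X Y that
      by (simp add: block_ctrl_unitary_conj[of V, OF V] block_kron mult_smult_distrib
          mult_smult_assoc_mat[OF mult_carrier_mat[OF Va Y] Vb'])
    then show ?thesis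
      by (simp add: trace_smult[OF mult_carrier_mat[OF mult_carrier_mat[OF Va Y] Vb']])
  qed
  then show ?thesis
    unfolding ptrace2_eq_trace_block by (intro eq_matI) auto
qed

lemma ptrace2_ctrl_unitary_conj_phase_kickback:
  assumes V: "\<And>i j. i < 2 \<Longrightarrow> j < 2 \<Longrightarrow> V i j \<in> carrier_mat 4 4"
    and v: "v \<in> carrier_vec 4" and \<rho>: "\<rho> \<in> carrier_mat 4 4" "mat_adjoint \<rho> = \<rho>"
    and kick: "\<And>a. a < 4 \<Longrightarrow> v $ a \<noteq> 0 \<Longrightarrow> ctrl_block V a * \<rho> = s a \<cdot>\<^sub>m \<rho>"
  shows "ptrace2 (ctrl_unitary V * kron (ketbra v) \<rho> * mat_adjoint (ctrl_unitary V))
       = trace \<rho> \<cdot>\<^sub>m ketbra (vec 4 (\<lambda>a. s a * v $ a))"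
proof -
  have entry: "v $ a * cnj (v $ b) * trace (ctrl_block V a * \<rho> * mat_adjoint (ctrl_block V b))
      = trace \<rho> * (s a * v $ a * cnj (s b * v $ b))" if "a < 4" "b < 4" for a b
  proof (cases "v $ a = 0 \<or> v $ b = 0")
    case False
    have Vb: "ctrl_block V b \<in> carrier_mat 4 4"
      using V \<open>b < 4\<close> by (simp add: ctrl_block_def)
    then have Vb': "mat_adjoint (ctrl_block V b) \<in> carrier_mat 4 4"
      by auto
    have "\<rho> * mat_adjoint (ctrl_block V b) = mat_adjoint (ctrl_block V b * \<rho>)"
      using Vb \<rho> by (simp add: mat_adjoint_mult)
    also have "\<dots> = cnj (s b) \<cdot>\<^sub>m \<rho>"
      using kick[OF \<open>b < 4\<close>] False \<rho>(2) by (simp add: mat_adjoint_smult)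
    finally have "ctrl_block V a * \<rho> * mat_adjoint (ctrl_block V b) = s a \<cdot>\<^sub>m (cnj (s b) \<cdot>\<^sub>m \<rho>)"
      using kick[OF \<open>a < 4\<close>] False mult_smult_assoc_mat[OF \<rho>(1) Vb'] by simp
    then show ?thesis
      using \<rho>(1) by (simp add: trace_smult[of _ 4])
  qed auto
  have "ketbra v \<in> carrier_mat 4 4"
    using ketbra_carrier[of v] v by (simp add: carrier_vecD)
  then show ?thesis
    using v by (intro eq_matI) (auto simp: ptrace2_ctrl_unitary_conj_kron[of V, OF V _ \<rho>(1)] entry)
qed

lemma sum_lessThan_4: "(\<Sum>k<4::nat. f k) = f 0 + f 1 + f 2 + (f 3 :: 'a::comm_monoid_add)"
  by (simp add: lessThan_nat_numeral ac_simps)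

lemma s2_mult_s2: "s2 * s2 = 1 / 2"
proof -
  have "1 / sqrt 2 * (1 / sqrt 2) = (1 / 2 :: real)"
    by simp
  then show ?thesis
    unfolding s2_def by (metis of_real_mult of_real_divide of_real_1 of_real_numeral)
qed

lemma cnj_s2 [simp]: "cnj s2 = s2"
  unfolding s2_def by simp

lemma sqrt_2_minus_sqrt_2: "sqrt (2 - sqrt 2) = (sqrt 2 - 1) * sqrt (2 + sqrt 2)"
proof (rule real_sqrt_unique)
  have "((sqrt 2 - 1) * sqrt (2 + sqrt 2))\<^sup>2 = (3 - 2 * sqrt 2) * (2 + sqrt 2)"
    by (simp add: power_mult_distrib power2_eq_square algebra_simps)
  also have "\<dots> = 2 - sqrt 2"
    by (simp add: algebra_simps)
  finally show "((sqrt 2 - 1) * sqrt (2 + sqrt 2))\<^sup>2 = 2 - sqrt 2" .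
  show "0 \<le> (sqrt 2 - 1) * sqrt (2 + sqrt 2)"
    by simp
qed

(* \<alpha> / 2 and \<beta> / 2 are the amplitudes of chi_plus; simp pulls the factor 1 / 2 out of them. *)
lemma chi_amplitudes:
  fixes \<alpha> \<beta> :: complex
  defines "\<alpha> \<equiv> complex_of_real (sqrt (2 + sqrt 2))" and "\<beta> \<equiv> complex_of_real (sqrt (2 - sqrt 2))"
  shows "s2 * \<alpha> + s2 * \<beta> = \<alpha>" "s2 * \<alpha> - s2 * \<beta> = \<beta>" "\<alpha> * \<alpha> + \<beta> * \<beta> = 4"
proof -
  have "1 / sqrt 2 * (sqrt (2 + sqrt 2) + sqrt (2 - sqrt 2)) = sqrt (2 + sqrt 2)"
    unfolding sqrt_2_minus_sqrt_2 by (simp add: field_simps)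
  then show "s2 * \<alpha> + s2 * \<beta> = \<alpha>"
    unfolding s2_def \<alpha>_def \<beta>_def by (metis of_real_add of_real_mult distrib_left)
  have "1 / sqrt 2 * (sqrt (2 + sqrt 2) - sqrt (2 - sqrt 2)) = sqrt (2 - sqrt 2)"
    unfolding sqrt_2_minus_sqrt_2 by (simp add: field_simps)
  then show "s2 * \<alpha> - s2 * \<beta> = \<beta>"
    unfolding s2_def \<alpha>_def \<beta>_def by (metis of_real_diff of_real_mult right_diff_distrib)
  have "sqrt 2 < 2"
    by (simp add: real_less_lsqrt)
  then have "sqrt (2 + sqrt 2) * sqrt (2 + sqrt 2) + sqrt (2 - sqrt 2) * sqrt (2 - sqrt 2) = 4"
    by simp
  then show "\<alpha> * \<alpha> + \<beta> * \<beta> = 4"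
    unfolding \<alpha>_def \<beta>_def by (metis of_real_add of_real_mult of_real_numeral)
qed

lemma ket2_carrier [simp]: "ket2 i j \<in> carrier_vec 4"
  unfolding ket2_def by simp

lemma bell_carrier [simp]: "bell k \<in> carrier_vec 4"
  unfolding bell_def carrier_vec_def by simp

lemma chi_carrier [simp]: "chi_plus \<in> carrier_vec 4" "chi_minus \<in> carrier_vec 4"
  unfolding chi_plus_def chi_minus_def carrier_vec_def by simp_all

lemma psi_carrier: "psi k \<in> carrier_mat 4 4"
  unfolding psi_def using ketbra_carrier[of "bell k"] by (simp add: carrier_vecD[OF bell_carrier])

lemma rho_sub_carrier: "rho_sub k \<in> carrier_mat 4 4"
  unfolding rho_sub_def psi_def using ketbra_carrier[of "ket2 _ _"] by (auto simp: ketbra_def)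

lemma mat_adjoint_rho_sub: "mat_adjoint (rho_sub k) = rho_sub k"
proof -
  have K: "ketbra (ket2 i j) \<in> carrier_mat 4 4" "psi k \<in> carrier_mat 4 4" for i j k
    using ketbra_carrier[of "ket2 i j"] psi_carrier by (simp_all add: carrier_vecD[OF ket2_carrier])
  show ?thesis
    unfolding rho_sub_def using K
    by (simp add: mat_adjoint_smult mat_adjoint_add[of _ 4 4] mat_adjoint_ketbra psi_def)
qed

lemma trace_rho_sub:
  assumes "k < 4"
  shows "trace (rho_sub k) = 1"
proof -
  let ?\<alpha> = "complex_of_real (sqrt (2 + sqrt 2))" and ?\<beta> = "complex_of_real (sqrt (2 - sqrt 2))"
  have "?\<alpha> * ?\<alpha> / 4 + ?\<beta> * ?\<beta> / 4 = 1" "?\<beta> * ?\<beta> / 4 + ?\<alpha> * ?\<alpha> / 4 = 1"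
    using chi_amplitudes(3) by (simp_all add: add_divide_distrib[symmetric] add.commute)
  then show ?thesis
    using assms
    by (auto simp: less_Suc_eq numeral_eq_Suc rho_sub_def psi_def bell_def ket2_def chi_plus_def
        chi_minus_def trace_def sum_lessThan_4 vec_of_list_index s2_mult_s2)
qed

definition swap_cz :: "complex mat" where
  "swap_cz = mat 4 4 (\<lambda>(i, j). [[1, 0, 0, 0], [0, 0, 1, 0], [0, 1, 0, 0], [0, 0, 0, -1]] ! i ! j)"

definition hadamard_even :: "complex mat" where
  "hadamard_even = mat 4 4 (\<lambda>(i, j). [[s2, 0, 0, s2], [0, 1, 0, 0], [0, 0, 1, 0], [s2, 0, 0, -s2]] ! i ! j)"

lemma swap_cz_carrier: "swap_cz \<in> carrier_mat 4 4"
  unfolding swap_cz_def by simp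

lemma hadamard_even_carrier: "hadamard_even \<in> carrier_mat 4 4"
  unfolding hadamard_even_def by simp

lemma mat_adjoint_swap_cz [simp]: "mat_adjoint swap_cz = swap_cz"
  using swap_cz_carrier by (intro eq_matI) (auto simp: swap_cz_def less_Suc_eq numeral_eq_Suc)

lemma is_unitary_swap_cz: "is_unitary 4 swap_cz"
proof (rule is_unitary_if_selfadjoint_involution[OF swap_cz_carrier mat_adjoint_swap_cz])
  show "swap_cz * swap_cz = 1\<^sub>m 4"
    by (intro eq_matI)
      (auto simp: swap_cz_def scalar_prod_def atLeast0LessThan sum_lessThan_4 less_Suc_eq numeral_eq_Suc)
qed

lemma mat_adjoint_hadamard_even [simp]: "mat_adjoint hadamard_even = hadamard_even"
  using hadamard_even_carrier by (intro eq_matI) (auto simp: hadamard_even_def less_Suc_eq numeral_eq_Suc)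

lemma is_unitary_hadamard_even: "is_unitary 4 hadamard_even"
proof (rule is_unitary_if_selfadjoint_involution[OF hadamard_even_carrier mat_adjoint_hadamard_even])
  show "hadamard_even * hadamard_even = 1\<^sub>m 4"
    by (intro eq_matI)
      (auto simp: hadamard_even_def scalar_prod_def atLeast0LessThan sum_lessThan_4 less_Suc_eq
        numeral_eq_Suc s2_mult_s2)
qed

lemma swap_cz_eigenvectors:
  "swap_cz *\<^sub>v ket2 0 0 = 1 \<cdot>\<^sub>v ket2 0 0" "swap_cz *\<^sub>v bell 2 = 1 \<cdot>\<^sub>v bell 2"
  "swap_cz *\<^sub>v ket2 1 1 = -1 \<cdot>\<^sub>v ket2 1 1" "swap_cz *\<^sub>v bell 3 = -1 \<cdot>\<^sub>v bell 3"
  by (intro eq_vecI;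
      auto simp: swap_cz_def ket2_def bell_def scalar_prod_def atLeast0LessThan sum_lessThan_4
        less_Suc_eq numeral_eq_Suc vec_of_list_index)+

lemma hadamard_even_eigenvectors:
  "hadamard_even *\<^sub>v chi_plus = 1 \<cdot>\<^sub>v chi_plus" "hadamard_even *\<^sub>v chi_minus = -1 \<cdot>\<^sub>v chi_minus"
proof -
  let ?\<alpha> = "complex_of_real (sqrt (2 + sqrt 2))" and ?\<beta> = "complex_of_real (sqrt (2 - sqrt 2))"
  have "s2 * ?\<beta> / 2 - s2 * ?\<alpha> / 2 = - ((s2 * ?\<alpha> - s2 * ?\<beta>) / 2)"
    by (simp add: field_simps)
  then have minus: "s2 * ?\<beta> / 2 - s2 * ?\<alpha> / 2 = - (?\<beta> / 2)"
    by (simp only: chi_amplitudes(2))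
  have plus: "s2 * ?\<beta> + s2 * ?\<alpha> = ?\<alpha>"
    using chi_amplitudes(1) by (simp only: add.commute)
  show "hadamard_even *\<^sub>v chi_plus = 1 \<cdot>\<^sub>v chi_plus" "hadamard_even *\<^sub>v chi_minus = -1 \<cdot>\<^sub>v chi_minus"
    by (intro eq_vecI;
        auto simp: hadamard_even_def chi_plus_def chi_minus_def scalar_prod_def atLeast0LessThan
          sum_lessThan_4 less_Suc_eq numeral_eq_Suc vec_of_list_index chi_amplitudes plus minus)+
qed

lemma swap_cz_mult_rho_sub: "swap_cz * rho_sub 0 = rho_sub 0" "swap_cz * rho_sub 1 = -1 \<cdot>\<^sub>m rho_sub 1"
  unfolding rho_sub_def psi_def
  using mult_mixture_eigenvectors[OF swap_cz_carrier _ _ swap_cz_eigenvectors(1,2)]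
    mult_mixture_eigenvectors[OF swap_cz_carrier _ _ swap_cz_eigenvectors(3,4)]
  by simp_all

lemma hadamard_even_mult_rho_sub:
  "hadamard_even * rho_sub 2 = rho_sub 2" "hadamard_even * rho_sub 3 = -1 \<cdot>\<^sub>m rho_sub 3"
  unfolding rho_sub_def
  using mult_ketbra_eigenvector[OF hadamard_even_carrier _ hadamard_even_eigenvectors(1)]
    mult_ketbra_eigenvector[OF hadamard_even_carrier _ hadamard_even_eigenvectors(2)]
  by simp_all

definition flag_unitary :: "nat \<Rightarrow> nat \<Rightarrow> complex mat" where
  "flag_unitary i j = (if i = 0 \<and> j = 0 then swap_cz else if i = 0 \<and> j = 1 then hadamard_even else 1\<^sub>m 4)"

lemma is_unitary_flag_unitary: "is_unitary 4 (flag_unitary i j)"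
  unfolding flag_unitary_def using is_unitary_swap_cz is_unitary_hadamard_even is_unitary_one by simp

lemma flag_unitary_kickback:
  assumes "k < 4" "a < 4" "bell k $ a \<noteq> 0"
  shows "ctrl_block flag_unitary a * rho_sub k = (if a < 2 then (-1) ^ k else 1) \<cdot>\<^sub>m rho_sub k"
proof -
  have "k \<in> {0, 1, 2, 3}" "a \<in> {0, 1, 2, 3}"
    using assms(1,2) by auto
  then show ?thesis
    using assms(3) rho_sub_carrier[of k]
    by (auto simp: ctrl_block_def flag_unitary_def bell_def vec_of_list_index
        swap_cz_mult_rho_sub[unfolded One_nat_def] hadamard_even_mult_rho_sub)
qed

lemma flag_unitary_signed_bell:
  assumes "k < 4"
  shows "vec 4 (\<lambda>a. (if a < 2 then (-1) ^ k else 1) * bell k $ a) = (-1) ^ k \<cdot>\<^sub>v bell (if k < 2 then 0 else 2)"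
proof -
  have "k \<in> {0, 1, 2, 3}"
    using assms by auto
  then show ?thesis
    by (intro eq_vecI) (auto simp: bell_def vec_of_list_index less_Suc_eq numeral_eq_Suc)
qed

lemma ptrace2_flag_unitary_conj_kron:
  assumes "k < 4"
  shows "ptrace2 (ctrl_unitary flag_unitary * kron (psi k) (rho_sub k) * mat_adjoint (ctrl_unitary flag_unitary))
       = psi (if k < 2 then 0 else 2)"
proof -
  have V: "flag_unitary i j \<in> carrier_mat 4 4" for i j
    using is_unitary_flag_unitary unfolding is_unitary_def by blast
  have "ptrace2 (ctrl_unitary flag_unitary * kron (psi k) (rho_sub k) * mat_adjoint (ctrl_unitary flag_unitary))
      = trace (rho_sub k) \<cdot>\<^sub>m ketbra ((-1) ^ k \<cdot>\<^sub>v bell (if k < 2 then 0 else 2))"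
    unfolding psi_def flag_unitary_signed_bell[OF assms, symmetric]
    by (rule ptrace2_ctrl_unitary_conj_phase_kickback[OF V bell_carrier rho_sub_carrier mat_adjoint_rho_sub])
      (use flag_unitary_kickback[OF assms] in simp)
  also have "\<dots> = psi (if k < 2 then 0 else 2)"
    by (simp add: trace_rho_sub[OF assms] ketbra_smult psi_def)
  finally show ?thesis .
qed

theorem mainTheorem1:
  fixes p \<kappa> :: real
  assumes "0 \<le> p" "p \<le> 1" "0 \<le> \<kappa>" "\<kappa> \<le> 1"
  shows "\<exists>V U. (\<forall>i<2. \<forall>j<2. is_unitary 4 (V i j)) \<and> U = ctrl_unitary V \<and> is_unitary 16 U \<and>
           ptrace2 (U * rho_H p \<kappa> * mat_adjoint U) =
             complex_of_real (1 - \<kappa>) \<cdot>\<^sub>m (complex_of_real p \<cdot>\<^sub>m psi 0 + complex_of_real (1 - p) \<cdot>\<^sub>m psi 2)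
             + complex_of_real (\<kappa> / 4) \<cdot>\<^sub>m 1\<^sub>m 4"
proof (intro exI conjI allI impI)
  let ?U = "ctrl_unitary flag_unitary"
  show "is_unitary 4 (flag_unitary i j)" for i j
    by (rule is_unitary_flag_unitary)
  show U: "is_unitary 16 ?U"
    using is_unitary_ctrl_unitary is_unitary_flag_unitary by blast
  then have UC: "?U \<in> carrier_mat 16 16" and UU: "?U * mat_adjoint ?U = 1\<^sub>m 16"
    unfolding is_unitary_def by auto
  have K: "kron (psi k) (rho_sub k) \<in> carrier_mat 16 16" for k
    using kron_carrier[OF psi_carrier rho_sub_carrier] by simp
  let ?q = "\<lambda>k. complex_of_real (qcoef p k)"
  have "ptrace2 (?U * rho_H p \<kappa> * mat_adjoint ?U)
      = complex_of_real (1 - \<kappa>) \<cdot>\<^sub>m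
          (?q 0 \<cdot>\<^sub>m psi 0 + ?q 1 \<cdot>\<^sub>m psi 0 + ?q 2 \<cdot>\<^sub>m psi 2 + ?q 3 \<cdot>\<^sub>m psi 2)
        + complex_of_real (\<kappa> / 16) \<cdot>\<^sub>m (4 \<cdot>\<^sub>m 1\<^sub>m 4)"
    unfolding rho_H_def using UC K
    by (simp add: ptrace2_conj_add ptrace2_conj_smult ptrace2_flag_unitary_conj_kron UU ptrace2_one)
  also have "\<dots> = complex_of_real (1 - \<kappa>) \<cdot>\<^sub>m (complex_of_real p \<cdot>\<^sub>m psi 0 + complex_of_real (1 - p) \<cdot>\<^sub>m psi 2)
             + complex_of_real (\<kappa> / 4) \<cdot>\<^sub>m 1\<^sub>m 4"
  proof -
    have "dim_row (psi k) = 4" "dim_col (psi k) = 4" for k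
      using psi_carrier by auto
    then show ?thesis
      by (intro eq_matI) (auto simp: qcoef_def field_simps)
  qed
  finally show "ptrace2 (?U * rho_H p \<kappa> * mat_adjoint ?U) = \<dots>" .
qed simp

end
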